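(* Consider a hierarchical tensor factorization with mode tree $\mathcal T$ whose weight matrices $(W^{(\nu)}(t))_{\nu\in\mathcal T}$ evolve under gradient flow on $\phi_H$ for $t\ge0$. Then for all $\nu\in\mathrm{int}(\mathcal T)$, $r\in[R_\nu]$ and $w,w'\in\mathrm{LC}(\nu,r)$: $$\|w(t)\|^2-\|w'(t)\|^2=\|w(0)\|^2-\|w'(0)\|^2\quad\text{for all } t\ge0.$$
   Context: Fix $N\in\mathbb N$, $D_1,\dots,D_N\in\mathbb N$; $[K]:=\{1,\dots,K\}$. Norms are Frobenius norms, $\otimes$ the tensor product. A mode tree $\mathcal T$ over $[N]$ is a rooted tree whose nodes are labeled by subsets of $[N]$, with exactly $N$ leaves labeled $\{1\},\dots,\{N\}$, and where each interior node's label is the union of its children's labels; nodes are identified with labels, the root is $[N]$, $\mathrm{int}(\mathcal T)$ denotes interior nodes, $Pa(\nu)$ the parent, $C(\nu)$ the children (in a fixed order). A hierarchical tensor factorization is given by $R_\nu\in\mathbb N$ ($\nu\in\mathrm{int}(\mathcal T)$), with $R_{Pa([N])}:=1$, $R_{\{n\}}:=D_n$, and weight matrices $W^{(\nu)}\in\mathbb R^{R_\nu\times R_{Pa(\nu)}}$, $\nu\in\mathcal T$. Intermediate tensors: $\mathcal W^{(\{n\},r)}:=W^{(\{n\})}_{:,r}$; for $\nu\in\mathrm{int}(\mathcal T)\setminus\{[N]\}$ (leaves to root) and $r\in[R_{Pa(\nu)}]$, $\mathcal W^{(\nu,r)}:=\pi_\nu\big(\sum_{r'=1}^{R_\nu}W^{(\nu)}_{r',r}\bigotimes_{\nu_c\in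 C(\nu)}\mathcal W^{(\nu_c,r')}\big)$; end tensor $\mathcal W_H:=\pi_{[N]}\big(\sum_{r'=1}^{R_{[N]}}W^{([N])}_{r',1}\bigotimes_{\nu_c\in C([N])}\mathcal W^{(\nu_c,r')}\big)\in\mathbb R^{D_1\times\cdots\times D_N}$, where $\pi_\nu$ permutes modes (ordered by children, each child's elements ascending) into ascending order of the elements of $\nu$. $\mathrm{LC}(\nu,r)$ ($\nu\in\mathrm{int}(\mathcal T)$, $r\in[R_\nu]$) is the collection of vectors $W^{(\nu)}_{r,:}$ and $W^{(\nu_c)}_{:,r}$, $\nu_c\in C(\nu)$. Let $\mathcal L_H:\mathbb R^{D_1\times\cdots\times D_N}\to\mathbb R_{\ge0}$ be differentiable and locally smooth, $\phi_H((W^{(\nu)})_\nu):=\mathcal L_H(\mathcal W_H)$; gradient flow: $\frac{d}{dt}W^{(\nu)}(t)=-\frac{\partial}{\partial W^{(\nu)}}\phi_H((W^{(\nu')}(t))_{\nu'})$ for all $\nu\in\mathcal T$, $t\ge0$. *)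

theory Defs
  imports "HOL-Analysis.Analysis"
begin

datatype mtree = Leaf nat | Node "mtree list"

fun lbl :: "mtree \<Rightarrow> nat set" where
  "lbl (Leaf n) = {n}"
| "lbl (Node cs) = \<Union> (set (map lbl cs))"

fun leaves :: "mtree \<Rightarrow> nat list" where
  "leaves (Leaf n) = [n]"
| "leaves (Node cs) = concat (map leaves cs)"

text \<open>Every interior node has at least two children (a node with a single child would carry
  the same label as its child, contradicting the identification of nodes with labels).\<close>
fun wf_mt :: "mtree \<Rightarrow> bool" where
  "wf_mt (Leaf n) = True"
| "wf_mt (Node cs) = (length cs \<ge> 2 \<and> (\<forall>c\<in>set cs. wf_mt c))"

fun subtrees :: "mtree \<Rightarrow> mtree set" where
  "subtrees (Leaf n) = {Leaf n}"
| "subtrees (Node cs) = insert (Node cs) (\<Union>c\<in>set cs. subtrees c)"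

definition mode_tree :: "nat \<Rightarrow> mtree \<Rightarrow> bool" where
  "mode_tree N T \<longleftrightarrow> (\<exists>cs. T = Node cs) \<and> wf_mt T \<and> distinct (leaves T)
     \<and> set (leaves T) = {1..N}"

definition nodes :: "mtree \<Rightarrow> nat set set" where
  "nodes T = lbl ` subtrees T"

definition interior :: "mtree \<Rightarrow> nat set set" where
  "interior T = {lbl (Node cs) | cs. Node cs \<in> subtrees T}"

definition children :: "mtree \<Rightarrow> nat set \<Rightarrow> nat set set" where
  "children T \<nu> = {lbl c | cs c. Node cs \<in> subtrees T \<and> lbl (Node cs) = \<nu> \<and> c \<in> set cs}"

definition parent :: "mtree \<Rightarrow> nat set \<Rightarrow> nat set" where
  "parent T \<nu> = (THE \<mu>. \<exists>cs c. Node cs \<in> subtrees T \<and> lbl (Node cs) = \<mu> \<and> c \<in> set cs \<and> lbl c = \<nu>)"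

definition rk :: "(nat set \<Rightarrow> nat) \<Rightarrow> (nat \<Rightarrow> nat) \<Rightarrow> nat set \<Rightarrow> nat" where
  "rk R D \<nu> = (if card \<nu> = 1 then D (the_elem \<nu>) else R \<nu>)"

definition prk :: "mtree \<Rightarrow> (nat set \<Rightarrow> nat) \<Rightarrow> (nat \<Rightarrow> nat) \<Rightarrow> nat set \<Rightarrow> nat" where
  "prk T R D \<nu> = (if \<nu> = lbl T then 1 else rk R D (parent T \<nu>))"

text \<open>A tensor with modes in a set is represented by its entries as a function of an index
  assignment (mode \<mapsto> index, indices 0-based). The tensor product of tensors over disjoint
  mode sets, followed by the mode permutation \<pi>_\<nu> into ascending order, is then simply the
  pointwise product of entries.\<close>

type_synonym params = "nat set \<Rightarrow> nat \<Rightarrow> nat \<Rightarrow> real"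
type_synonym tensor = "(nat \<Rightarrow> nat) \<Rightarrow> real"

fun ten :: "(nat set \<Rightarrow> nat) \<Rightarrow> params \<Rightarrow> mtree \<Rightarrow> nat \<Rightarrow> tensor" where
  "ten R W (Leaf n) r idx = W {n} (idx n) r"
| "ten R W (Node cs) r idx =
     (\<Sum>r'<R (lbl (Node cs)). W (lbl (Node cs)) r' r * prod_list (map (\<lambda>c. ten R W c r' idx) cs))"

text \<open>Valid multi-indices of R^{D_1 x ... x D_N} (0-based; unused modes set to 0).\<close>
definition idxset :: "nat \<Rightarrow> (nat \<Rightarrow> nat) \<Rightarrow> (nat \<Rightarrow> nat) set" where
  "idxset N D = {idx. (\<forall>n\<in>{1..N}. idx n < D n) \<and> (\<forall>n. n \<notin> {1..N} \<longrightarrow> idx n = 0)}"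

definition tspace :: "nat \<Rightarrow> (nat \<Rightarrow> nat) \<Rightarrow> tensor set" where
  "tspace N D = {X. \<forall>idx. idx \<notin> idxset N D \<longrightarrow> X idx = 0}"

definition tnorm :: "nat \<Rightarrow> (nat \<Rightarrow> nat) \<Rightarrow> tensor \<Rightarrow> real" where
  "tnorm N D X = sqrt (\<Sum>idx\<in>idxset N D. (X idx)\<^sup>2)"

text \<open>End tensor W_H, with r = 0 the unique column index of W^([N]) (R_{Pa([N])} = 1).\<close>
definition end_tensor :: "nat \<Rightarrow> (nat \<Rightarrow> nat) \<Rightarrow> mtree \<Rightarrow> (nat set \<Rightarrow> nat) \<Rightarrow> params \<Rightarrow> tensor" where
  "end_tensor N D T R W = (\<lambda>idx. if idx \<in> idxset N D then ten R W T 0 idx else 0)"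

definition is_gradient :: "nat \<Rightarrow> (nat \<Rightarrow> nat) \<Rightarrow> (tensor \<Rightarrow> real) \<Rightarrow> (tensor \<Rightarrow> tensor) \<Rightarrow> bool" where
  "is_gradient N D L G \<longleftrightarrow> (\<forall>X\<in>tspace N D. G X \<in> tspace N D \<and>
     (\<forall>\<epsilon>>0. \<exists>\<delta>>0. \<forall>H\<in>tspace N D. tnorm N D H < \<delta> \<longrightarrow>
        \<bar>L (\<lambda>idx. X idx + H idx) - L X - (\<Sum>idx\<in>idxset N D. G X idx * H idx)\<bar> \<le> \<epsilon> * tnorm N D H))"

definition differentiable_loss :: "nat \<Rightarrow> (nat \<Rightarrow> nat) \<Rightarrow> (tensor \<Rightarrow> real) \<Rightarrow> bool" where
  "differentiable_loss N D L \<longleftrightarrow> (\<exists>G. is_gradient N D L G)"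

definition locally_smooth_loss :: "nat \<Rightarrow> (nat \<Rightarrow> nat) \<Rightarrow> (tensor \<Rightarrow> real) \<Rightarrow> bool" where
  "locally_smooth_loss N D L \<longleftrightarrow> (\<exists>G. is_gradient N D L G \<and>
     (\<forall>X\<in>tspace N D. \<exists>\<delta>>0. \<exists>K. \<forall>Y\<in>tspace N D. \<forall>Z\<in>tspace N D.
        tnorm N D (\<lambda>idx. Y idx - X idx) < \<delta> \<longrightarrow> tnorm N D (\<lambda>idx. Z idx - X idx) < \<delta> \<longrightarrow>
        tnorm N D (\<lambda>idx. G Y idx - G Z idx) \<le> K * tnorm N D (\<lambda>idx. Y idx - Z idx)))"

definition phiH :: "nat \<Rightarrow> (nat \<Rightarrow> nat) \<Rightarrow> mtree \<Rightarrow> (nat set \<Rightarrow> nat) \<Rightarrow> (tensor \<Rightarrow> real) \<Rightarrow> params \<Rightarrow> real" where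
  "phiH N D T R L W = L (end_tensor N D T R W)"

definition upd :: "params \<Rightarrow> nat set \<Rightarrow> nat \<Rightarrow> nat \<Rightarrow> real \<Rightarrow> params" where
  "upd W \<nu> i j x = W(\<nu> := (W \<nu>)(i := (W \<nu> i)(j := x)))"

definition gradient_flow :: "nat \<Rightarrow> (nat \<Rightarrow> nat) \<Rightarrow> mtree \<Rightarrow> (nat set \<Rightarrow> nat) \<Rightarrow> (tensor \<Rightarrow> real)
    \<Rightarrow> (real \<Rightarrow> params) \<Rightarrow> bool" where
  "gradient_flow N D T R L W \<longleftrightarrow> (\<forall>t\<ge>0. \<forall>\<nu>\<in>nodes T. \<forall>i<rk R D \<nu>. \<forall>j<prk T R D \<nu>.
     \<exists>g. ((\<lambda>x. phiH N D T R L (upd (W t) \<nu> i j x)) has_real_derivative g) (at (W t \<nu> i j))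
       \<and> ((\<lambda>s. W s \<nu> i j) has_real_derivative (- g)) (at t within {0..}))"

text \<open>Vectors are lists of reals; LC(\<nu>,r) is the collection of the vectors W^(\<nu>)_{r,:} and
  W^(\<nu>_c)_{:,r} for children \<nu>_c, given as functions of the weights.\<close>
definition LC :: "mtree \<Rightarrow> (nat set \<Rightarrow> nat) \<Rightarrow> (nat \<Rightarrow> nat) \<Rightarrow> nat set \<Rightarrow> nat \<Rightarrow> (params \<Rightarrow> real list) set" where
  "LC T R D \<nu> r = insert (\<lambda>W. map (\<lambda>j. W \<nu> r j) [0..<prk T R D \<nu>])
     {(\<lambda>W. map (\<lambda>i. W c i r) [0..<rk R D c]) | c. c \<in> children T \<nu>}"

definition vnorm :: "real list \<Rightarrow> real" where
  "vnorm v = sqrt (sum_list (map (\<lambda>x. x\<^sup>2) v))"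

end

theory Submission
  imports Defs
begin

text \<open>Fix an interior node \<open>\<nu>\<close> and \<open>r < R\<^sub>\<nu>\<close>. By multilinearity of the recursion along the
  path from the root to \<open>\<nu>\<close>, the end tensor \<open>W\<^sub>H\<close> is an affine function of each vector
  \<open>w \<in> LC(\<nu>, r)\<close>, and the constant term is the same for all of them: the end tensor
  \<open>W\<^sub>H\<^sup>0\<close> with the summand of index \<open>r\<close> at \<open>\<nu>\<close> removed. Gradient flow therefore gives
  \<open>d/dt \<parallel>w\<parallel>\<^sup>2 = -2\<langle>\<nabla>L(W\<^sub>H), W\<^sub>H - W\<^sub>H\<^sup>0\<rangle>\<close> for every \<open>w \<in> LC(\<nu>, r)\<close>, a rate
  independent of \<open>w\<close>, so the differences of the squared norms are constant.\<close>

lemma lbl_eq_set_leaves: "lbl S = set (leaves S)"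
  by (induction S rule: lbl.induct) auto

lemma subtrees_refl: "S \<in> subtrees S"
  by (cases S) auto

lemma subtrees_trans: "S1 \<in> subtrees S2 \<Longrightarrow> S2 \<in> subtrees S3 \<Longrightarrow> S1 \<in> subtrees S3"
  by (induction S3 arbitrary: S2 rule: subtrees.induct) auto

lemma child_in_subtrees: "c \<in> set cs \<Longrightarrow> c \<in> subtrees (Node cs)"
  using subtrees_refl by auto

lemma lbl_subtree_subset: "S1 \<in> subtrees S \<Longrightarrow> lbl S1 \<subseteq> lbl S"
  by (induction S rule: subtrees.induct) auto

lemma size_subtree_le: "S1 \<in> subtrees S \<Longrightarrow> size S1 \<le> size S"
proof (induction S rule: subtrees.induct)
  case (2 cs)
  then show ?case
    using size_list_estimation'[of _ cs _ size] by fastforce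
qed simp

lemma size_child_less: "c \<in> set cs \<Longrightarrow> size c < size (Node cs)"
  using size_list_estimation'[OF _ order_refl, of c cs size] by simp

lemma proper_subtree_of_Node:
  "S0 \<in> subtrees S \<Longrightarrow> S0 \<noteq> S \<Longrightarrow> \<exists>cs. Node cs \<in> subtrees S \<and> S0 \<in> set cs"
proof (induction S arbitrary: S0 rule: subtrees.induct)
  case (2 cs)
  then obtain c where c: "c \<in> set cs" "S0 \<in> subtrees c" by auto
  show ?case
  proof (cases "S0 = c")
    case False
    then obtain cs' where "Node cs' \<in> subtrees c" "S0 \<in> set cs'" using "2.IH"[OF c] by blast
    then show ?thesis using c by auto
  qed (use c in auto)
qed simp

lemma lbl_nonempty: "wf_mt S \<Longrightarrow> lbl S \<noteq> {}"
proof (induction S)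
  case (Node cs)
  then obtain c where "c \<in> set cs" by (cases cs) auto
  with Node show ?case by auto
qed simp

definition good_mtree :: "mtree \<Rightarrow> bool" where
  "good_mtree S \<longleftrightarrow> wf_mt S \<and> distinct (leaves S)"

lemma good_mtree_subtree: "good_mtree S \<Longrightarrow> S1 \<in> subtrees S \<Longrightarrow> good_mtree S1"
  unfolding good_mtree_def
  by (induction S rule: subtrees.induct) (auto simp: distinct_concat_iff)

lemma good_mtree_child: "good_mtree (Node cs) \<Longrightarrow> c \<in> set cs \<Longrightarrow> good_mtree c"
  using good_mtree_subtree child_in_subtrees by blast

lemma good_mtree_lbl_nonempty: "good_mtree S \<Longrightarrow> lbl S \<noteq> {}"
  using lbl_nonempty good_mtree_def by blast

lemma good_mtree_children:
  assumes "good_mtree (Node cs)"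
  shows good_mtree_distinct_children: "distinct cs"
    and good_mtree_disjoint_children:
      "\<And>c1 c2. c1 \<in> set cs \<Longrightarrow> c2 \<in> set cs \<Longrightarrow> c1 \<noteq> c2 \<Longrightarrow> lbl c1 \<inter> lbl c2 = {}"
proof -
  have nonempty: "leaves c \<noteq> []" if "c \<in> set cs" for c
    using assms that good_mtree_child good_mtree_lbl_nonempty lbl_eq_set_leaves by fastforce
  have dist: "distinct (concat (map leaves cs))"
    using assms unfolding good_mtree_def by simp
  have "removeAll [] (map leaves cs) = map leaves cs"
    using nonempty by (intro removeAll_id) force
  then have dist_map: "distinct (map leaves cs)"
    using dist by (simp add: distinct_concat_iff)
  then show "distinct cs" by (simp add: distinct_map)
  fix c1 c2 assume c: "c1 \<in> set cs" "c2 \<in> set cs" "c1 \<noteq> c2"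
  then have "leaves c1 \<noteq> leaves c2"
    using dist_map by (metis distinct_map inj_onD)
  then show "lbl c1 \<inter> lbl c2 = {}"
    using dist c by (auto simp: distinct_concat_iff lbl_eq_set_leaves)
qed

lemma lbl_child_psubset:
  assumes "good_mtree (Node cs)" "c \<in> set cs"
  shows "lbl c \<subset> lbl (Node cs)"
proof -
  have "2 \<le> length cs" using assms(1) unfolding good_mtree_def by simp
  then have "0 < length cs" "1 < length cs" by auto
  then have "cs ! 0 \<in> set cs" "cs ! 1 \<in> set cs" "cs ! 0 \<noteq> cs ! 1"
    using nth_eq_iff_index_eq[OF good_mtree_distinct_children[OF assms(1)]] by auto
  then obtain c' where c': "c' \<in> set cs" "c' \<noteq> c" by metis
  then have "lbl c' \<noteq> {}" "lbl c' \<inter> lbl c = {}"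
    using assms good_mtree_child good_mtree_lbl_nonempty good_mtree_disjoint_children by auto
  then show ?thesis using c' assms(2) by auto
qed

lemma card_lbl_Node:
  assumes "good_mtree (Node cs)"
  shows "card (lbl (Node cs)) \<noteq> 1"
proof
  assume "card (lbl (Node cs)) = 1"
  then obtain a where a: "lbl (Node cs) = {a}" by (meson card_1_singletonE)
  obtain c where c: "c \<in> set cs" using assms unfolding good_mtree_def by (cases cs) auto
  then have "lbl c \<subset> {a}" "lbl c \<noteq> {}"
    using lbl_child_psubset[OF assms] a assms good_mtree_child good_mtree_lbl_nonempty by auto
  then show False by auto
qed

lemma lbl_subtree_of_child_neq:
  assumes "good_mtree (Node cs)" "c \<in> set cs" "X \<in> subtrees c"
  shows "lbl X \<noteq> lbl (Node cs)"
  using lbl_subtree_subset[OF assms(3)] lbl_child_psubset[OF assms(1,2)] by blast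

lemma lbl_subtrees_of_siblings_disjoint:
  assumes "good_mtree (Node cs)" "c1 \<in> set cs" "c2 \<in> set cs" "c1 \<noteq> c2"
    and "X1 \<in> subtrees c1" "X2 \<in> subtrees c2"
  shows "lbl X1 \<inter> lbl X2 = {}"
  using good_mtree_disjoint_children[OF assms(1-4)] lbl_subtree_subset[OF assms(5)]
    lbl_subtree_subset[OF assms(6)] by blast

lemma inj_on_lbl_subtrees:
  "good_mtree S \<Longrightarrow> inj_on lbl (subtrees S)"
proof (induction S rule: subtrees.induct)
  case (2 cs)
  have good: "good_mtree (Node cs)" by fact
  show ?case
  proof (rule inj_onI)
    fix X1 X2 assume X: "X1 \<in> subtrees (Node cs)" "X2 \<in> subtrees (Node cs)" "lbl X1 = lbl X2"
    have below: "lbl X \<noteq> lbl (Node cs)" if "X \<in> subtrees c" "c \<in> set cs" for X c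
      using lbl_subtree_of_child_neq[OF good] that by blast
    have cases: "X = Node cs \<or> (\<exists>c\<in>set cs. X \<in> subtrees c)" if "X \<in> subtrees (Node cs)" for X
      using that by simp
    show "X1 = X2"
    proof (cases "X1 = Node cs \<or> X2 = Node cs")
      case True
      then show ?thesis using cases[OF X(1)] cases[OF X(2)] X(3) below by metis
    next
      case False
      then obtain c1 c2 where c: "c1 \<in> set cs" "X1 \<in> subtrees c1" "c2 \<in> set cs" "X2 \<in> subtrees c2"
        using X by auto
      have "lbl X1 \<noteq> {}"
        using good_mtree_lbl_nonempty good_mtree_subtree[OF good] c child_in_subtrees subtrees_trans
        by blast
      then have "c1 = c2"
        using lbl_subtrees_of_siblings_disjoint[OF good c(1,3) _ c(2,4)] X(3) by auto
      then show ?thesis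
        using "2.IH"[OF c(1) good_mtree_child[OF good c(1)]] c X(3) by (auto dest: inj_onD)
    qed
  qed
qed simp

lemma child_not_subtree_of_sibling:
  assumes "good_mtree (Node cs)" "c \<in> set cs" "c' \<in> set cs" "Node a \<in> subtrees c'" "c \<in> set a"
  shows False
proof (cases "c = c'")
  case True
  then show False
    using size_subtree_le[OF assms(4)] size_child_less[OF assms(5)] by simp
next
  case False
  have "c \<in> subtrees c'" using subtrees_trans[OF child_in_subtrees[OF assms(5)] assms(4)] .
  then show False
    using lbl_subtrees_of_siblings_disjoint[OF assms(1-3) False subtrees_refl]
      good_mtree_lbl_nonempty[OF good_mtree_child[OF assms(1,2)]] by blast
qed

lemma unique_parent:
  "good_mtree S \<Longrightarrow> Node a \<in> subtrees S \<Longrightarrow> Node b \<in> subtrees S \<Longrightarrow> c \<in> set a \<Longrightarrow> c \<in> set b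
    \<Longrightarrow> a = b"
proof (induction S arbitrary: a b rule: subtrees.induct)
  case (2 cs)
  note sibling = child_not_subtree_of_sibling[OF "2.prems"(1)]
  consider "Node a = Node cs" "Node b = Node cs"
    | c1 where "Node a = Node cs" "c1 \<in> set cs" "Node b \<in> subtrees c1"
    | c1 where "Node b = Node cs" "c1 \<in> set cs" "Node a \<in> subtrees c1"
    | c1 c2 where "c1 \<in> set cs" "Node a \<in> subtrees c1" "c2 \<in> set cs" "Node b \<in> subtrees c2"
    using "2.prems"(2,3) by auto
  then show ?case
  proof cases
    case (4 c1 c2)
    have "c1 = c2"
    proof (rule ccontr)
      assume "c1 \<noteq> c2"
      moreover have "c \<in> subtrees c1" "c \<in> subtrees c2"
        using 4 "2.prems"(4,5) child_in_subtrees subtrees_trans by blast+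
      ultimately show False
        using lbl_subtrees_of_siblings_disjoint[OF "2.prems"(1) 4(1,3)]
          good_mtree_lbl_nonempty[OF good_mtree_subtree[OF "2.prems"(1)]]
          subtrees_trans[OF _ child_in_subtrees[OF 4(1)]] by blast
    qed
    then show ?thesis
      using "2.IH"[OF 4(1) good_mtree_child[OF "2.prems"(1) 4(1)]] 4 "2.prems"(4,5) by blast
  qed (use "2.prems"(4,5) sibling in blast)+
qed simp

lemma parent_lbl_child:
  assumes "good_mtree T" "Node cs \<in> subtrees T" "c \<in> set cs"
  shows "parent T (lbl c) = lbl (Node cs)"
  unfolding parent_def
proof (rule the_equality)
  fix \<mu> assume "\<exists>cs' c'. Node cs' \<in> subtrees T \<and> lbl (Node cs') = \<mu> \<and> c' \<in> set cs' \<and> lbl c' = lbl c"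
  then obtain cs' c' where h: "Node cs' \<in> subtrees T" "lbl (Node cs') = \<mu>" "c' \<in> set cs'" "lbl c' = lbl c"
    by blast
  have "c' \<in> subtrees T" "c \<in> subtrees T"
    using h assms child_in_subtrees subtrees_trans by blast+
  then have "c' = c" using inj_on_lbl_subtrees[OF assms(1)] h(4) by (auto dest: inj_onD)
  then show "\<mu> = lbl (Node cs)" using unique_parent[OF assms(1) h(1) assms(2)] h(2,3) assms(3) by blast
qed (use assms in blast)

lemma rk_Leaf: "rk R D {n} = D n"
  unfolding rk_def by simp

lemma rk_Node: "good_mtree (Node cs) \<Longrightarrow> rk R D (lbl (Node cs)) = R (lbl (Node cs))"
  using card_lbl_Node unfolding rk_def by simp

lemma prk_child:
  assumes "good_mtree T" "Node cs \<in> subtrees T" "c \<in> set cs"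
  shows "prk T R D (lbl c) = R (lbl (Node cs))"
proof -
  have "lbl c \<noteq> lbl T"
    using lbl_child_psubset[OF good_mtree_subtree[OF assms(1,2)] assms(3)] lbl_subtree_subset[OF assms(2)]
    by blast
  then show ?thesis
    using rk_Node[OF good_mtree_subtree[OF assms(1,2)]] parent_lbl_child[OF assms]
    unfolding prk_def by simp
qed

section \<open>Multilinearity of the hierarchical factorization\<close>

definition agrees_off :: "mtree \<Rightarrow> params \<Rightarrow> params \<Rightarrow> bool" where
  "agrees_off S W' W \<longleftrightarrow> (\<forall>\<mu>. \<mu> \<notin> lbl ` subtrees S \<longrightarrow> W' \<mu> = W \<mu>)"

lemma agrees_off_mono: "agrees_off S0 W' W \<Longrightarrow> S0 \<in> subtrees S \<Longrightarrow> agrees_off S W' W"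
  unfolding agrees_off_def using subtrees_trans[of _ S0 S] by blast

lemma ten_cong_subtrees:
  "(\<And>S'. S' \<in> subtrees S \<Longrightarrow> W' (lbl S') = W (lbl S')) \<Longrightarrow> ten R W' S k idx = ten R W S k idx"
proof (induction S arbitrary: k)
  case (Node cs)
  have "ten R W' c r' idx = ten R W c r' idx" if c: "c \<in> set cs" for c r'
  proof (rule Node.IH[OF c])
    show "W' (lbl S') = W (lbl S')" if "S' \<in> subtrees c" for S'
      using Node.prems that c by auto
  qed
  moreover have "W' (lbl (Node cs)) = W (lbl (Node cs))"
    using Node.prems subtrees_refl by blast
  ultimately show ?case
    by (simp del: lbl.simps cong: map_cong)
qed simp

lemma prod_list_children:
  "good_mtree (Node cs) \<Longrightarrow> prod_list (map f cs) = (\<Prod>c\<in>set cs. f c)"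
  by (simp add: prod.distinct_set_conv_list good_mtree_distinct_children)

text \<open>The other children are unaffected because their subtrees carry labels disjoint from
  those below \<open>c0\<close>.\<close>
lemma ten_Node_split:
  assumes good: "good_mtree (Node cs)" and c0: "c0 \<in> set cs"
    and agree: "agrees_off c0 W' W"
  shows "ten R W' (Node cs) k idx = (\<Sum>r'<R (lbl (Node cs)). W (lbl (Node cs)) r' k * ten R W' c0 r' idx
            * (\<Prod>c\<in>set cs - {c0}. ten R W c r' idx))"
proof -
  have "lbl (Node cs) \<notin> lbl ` subtrees c0"
    using lbl_subtree_of_child_neq[OF good c0] by force
  then have root: "W' (lbl (Node cs)) = W (lbl (Node cs))"
    using agree unfolding agrees_off_def by simp
  have siblings: "ten R W' c r' idx = ten R W c r' idx" if c: "c \<in> set cs - {c0}" for c r'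
  proof (rule ten_cong_subtrees)
    fix S' assume S': "S' \<in> subtrees c"
    have c: "c \<in> set cs" "c0 \<noteq> c" using c by auto
    have "lbl S' \<noteq> {}"
      using good_mtree_lbl_nonempty good_mtree_subtree[OF good_mtree_child[OF good c(1)] S'] .
    moreover have "lbl X \<inter> lbl S' = {}" if "X \<in> subtrees c0" for X
      using lbl_subtrees_of_siblings_disjoint[OF good c0 c that S'] .
    ultimately have "lbl S' \<notin> lbl ` subtrees c0" by auto
    then show "W' (lbl S') = W (lbl S')"
      using agree unfolding agrees_off_def by simp
  qed
  have "prod_list (map (\<lambda>c. ten R W' c r' idx) cs)
      = ten R W' c0 r' idx * (\<Prod>c\<in>set cs - {c0}. ten R W c r' idx)" for r'
  proof -
    have "prod_list (map (\<lambda>c. ten R W' c r' idx) cs) = (\<Prod>c\<in>set cs. ten R W' c r' idx)"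
      by (rule prod_list_children[OF good])
    also have "\<dots> = ten R W' c0 r' idx * (\<Prod>c\<in>set cs - {c0}. ten R W' c r' idx)"
      using prod.remove[OF _ c0] by simp
    finally show ?thesis using siblings by simp
  qed
  note children = this
  show ?thesis
    by (subst ten.simps(2)) (simp only: root children mult.assoc)
qed

lemma ten_Node_linear_via_child:
  assumes good: "good_mtree (Node cs)" and c0: "c0 \<in> set cs" and S0: "S0 \<in> subtrees c0"
    and child: "\<And>r' W'. agrees_off S0 W' W \<Longrightarrow>
      ten R W' c0 r' idx = (\<Sum>j<K. cf r' j * ten R W' S0 j idx)"
  shows "\<exists>coef. \<forall>W'. agrees_off S0 W' W \<longrightarrow>
     ten R W' (Node cs) k idx = (\<Sum>j<K. coef j * ten R W' S0 j idx)"
proof -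
  let ?\<nu> = "lbl (Node cs)"
  define P where "P r' = (\<Prod>c\<in>set cs - {c0}. ten R W c r' idx)" for r'
  show ?thesis
  proof (intro exI[of _ "\<lambda>j. \<Sum>r'<R ?\<nu>. W ?\<nu> r' k * cf r' j * P r'"] allI impI)
    fix W' assume W': "agrees_off S0 W' W"
    have "ten R W' (Node cs) k idx = (\<Sum>r'<R ?\<nu>. W ?\<nu> r' k * ten R W' c0 r' idx * P r')"
      unfolding ten_Node_split[OF good c0 agrees_off_mono[OF W' S0]] P_def ..
    also have "\<dots> = (\<Sum>r'<R ?\<nu>. \<Sum>j<K. W ?\<nu> r' k * cf r' j * P r' * ten R W' S0 j idx)"
      by (simp only: child[OF W'] sum_distrib_left sum_distrib_right ac_simps)
    also have "\<dots> = (\<Sum>j<K. (\<Sum>r'<R ?\<nu>. W ?\<nu> r' k * cf r' j * P r') * ten R W' S0 j idx)"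
      unfolding sum_distrib_right by (rule sum.swap)
    finally show "ten R W' (Node cs) k idx
        = (\<Sum>j<K. (\<Sum>r'<R ?\<nu>. W ?\<nu> r' k * cf r' j * P r') * ten R W' S0 j idx)" .
  qed
qed

text \<open>The coefficients are products of weights off the path from the root to \<open>S0\<close>, hence the
  same for every \<open>W'\<close>.\<close>
lemma ten_linear_in_subtree:
  assumes "good_mtree S" "Node cs' \<in> subtrees S" "S0 \<in> set cs'"
  shows "\<exists>coef. \<forall>W'. agrees_off S0 W' W \<longrightarrow>
     ten R W' S k idx = (\<Sum>j<R (lbl (Node cs')). coef j * ten R W' S0 j idx)"
  using assms
proof (induction S arbitrary: k)
  case (Node cs)
  have good: "good_mtree (Node cs)" by fact
  show ?case
  proof (cases "cs' = cs")
    case True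
    then have S0: "S0 \<in> set cs" using Node by simp
    show ?thesis
    proof (intro exI[of _ "\<lambda>j. W (lbl (Node cs)) j k * (\<Prod>c\<in>set cs - {S0}. ten R W c j idx)"] allI impI)
      fix W' assume W': "agrees_off S0 W' W"
      show "ten R W' (Node cs) k idx = (\<Sum>j<R (lbl (Node cs')).
          W (lbl (Node cs)) j k * (\<Prod>c\<in>set cs - {S0}. ten R W c j idx) * ten R W' S0 j idx)"
        unfolding ten_Node_split[OF good S0 W'] True by (simp only: ac_simps)
    qed
  next
    case False
    then obtain c0 where c0: "c0 \<in> set cs" "Node cs' \<in> subtrees c0" using Node.prems(2) by auto
    have S0: "S0 \<in> subtrees c0" using subtrees_trans[OF child_in_subtrees[OF Node.prems(3)] c0(2)] .
    obtain cf where "\<And>r' W'. agrees_off S0 W' W \<Longrightarrow>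
        ten R W' c0 r' idx = (\<Sum>j<R (lbl (Node cs')). cf r' j * ten R W' S0 j idx)"
      using Node.IH[OF c0(1) good_mtree_child[OF good c0(1)] c0(2) Node.prems(3)] by metis
    then show ?thesis by (rule ten_Node_linear_via_child[OF good c0(1) S0])
  qed
qed simp

lemma ten_linear_in_node:
  assumes good: "good_mtree T" and S: "Node cs \<in> subtrees T"
  shows "\<exists>coef. \<forall>W'. agrees_off (Node cs) W' W \<longrightarrow>
     ten R W' T 0 idx = (\<Sum>k<prk T R D (lbl (Node cs)). coef k * ten R W' (Node cs) k idx)"
proof (cases "Node cs = T")
  case True
  then show ?thesis unfolding prk_def by (intro exI[of _ "\<lambda>_. 1"]) simp
next
  case False
  then obtain cs' where cs': "Node cs' \<in> subtrees T" "Node cs \<in> set cs'"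
    using proper_subtree_of_Node[OF S] by blast
  then show ?thesis
    using ten_linear_in_subtree[OF good cs', of W R 0 idx] prk_child[OF good cs', of R D] by simp
qed

definition row_upd :: "params \<Rightarrow> nat set \<Rightarrow> nat \<Rightarrow> (nat \<Rightarrow> real) \<Rightarrow> params" where
  "row_upd W \<nu> r v = W(\<nu> := (W \<nu>)(r := v))"

definition col_upd :: "params \<Rightarrow> nat set \<Rightarrow> nat \<Rightarrow> (nat \<Rightarrow> real) \<Rightarrow> params" where
  "col_upd W \<gamma> r u = W(\<gamma> := (\<lambda>i. (W \<gamma> i)(r := u i)))"

lemma row_upd_same: "row_upd W \<nu> r (W \<nu> r) = W"
  unfolding row_upd_def by simp

lemma col_upd_same: "col_upd W \<gamma> r (\<lambda>i. W \<gamma> i r) = W"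
  unfolding col_upd_def by (simp add: fun_eq_iff)

lemma row_upd_fun_upd: "row_upd W \<nu> r ((W \<nu> r)(j := x)) = upd W \<nu> r j x"
  unfolding row_upd_def upd_def by simp

lemma col_upd_fun_upd: "col_upd W \<gamma> r ((\<lambda>i. W \<gamma> i r)(i := x)) = upd W \<gamma> i r x"
  unfolding col_upd_def upd_def by (auto simp: fun_eq_iff)

lemma ten_row_upd_Node:
  assumes good: "good_mtree (Node cs)" and r: "r < R (lbl (Node cs))"
  shows "ten R (row_upd W (lbl (Node cs)) r v) (Node cs) k idx
       = (\<Sum>r'\<in>{..<R (lbl (Node cs))} - {r}. W (lbl (Node cs)) r' k * (\<Prod>c\<in>set cs. ten R W c r' idx))
         + v k * (\<Prod>c\<in>set cs. ten R W c r idx)"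
proof -
  let ?\<nu> = "lbl (Node cs)"
  let ?W' = "row_upd W ?\<nu> r v"
  let ?P = "\<lambda>r'. \<Prod>c\<in>set cs. ten R W c r' idx"
  have "ten R ?W' c r' idx = ten R W c r' idx" if c: "c \<in> set cs" for c r'
    using lbl_subtree_of_child_neq[OF good c] by (intro ten_cong_subtrees) (simp add: row_upd_def)
  then have children: "prod_list (map (\<lambda>c. ten R ?W' c r' idx) cs) = ?P r'" for r'
    by (simp add: prod_list_children[OF good])
  have "ten R ?W' (Node cs) k idx = (\<Sum>r'<R ?\<nu>. ?W' ?\<nu> r' k * ?P r')"
    by (subst ten.simps(2)) (simp only: children)
  also have "\<dots> = ?W' ?\<nu> r k * ?P r + (\<Sum>r'\<in>{..<R ?\<nu>} - {r}. ?W' ?\<nu> r' k * ?P r')"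
    using sum.remove[of "{..<R ?\<nu>}" r] r by simp
  also have "(\<Sum>r'\<in>{..<R ?\<nu>} - {r}. ?W' ?\<nu> r' k * ?P r') = (\<Sum>r'\<in>{..<R ?\<nu>} - {r}. W ?\<nu> r' k * ?P r')"
    unfolding row_upd_def by (rule sum.cong) auto
  also have "?W' ?\<nu> r k = v k" unfolding row_upd_def by simp
  finally show ?thesis by (simp only: add.commute)
qed

lemma ten_col_upd_self:
  assumes good: "good_mtree c0" and idx: "\<forall>n\<in>lbl c0. idx n < D n"
  shows "\<exists>p. \<forall>u k. ten R (col_upd W (lbl c0) r u) c0 k idx
     = (if k = r then (\<Sum>i<rk R D (lbl c0). u i * p i) else ten R W c0 k idx)"
proof (cases c0)
  case (Leaf n)
  have "(\<Sum>i<D n. u i * (if i = idx n then 1 else 0)) = u (idx n)" for u :: "nat \<Rightarrow> real"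
    using idx Leaf by (simp add: if_distrib sum.delta cong: if_cong)
  then show ?thesis
    using Leaf by (intro exI[of _ "\<lambda>i. if i = idx n then 1 else 0"]) (simp add: col_upd_def rk_Leaf)
next
  case (Node cs0)
  let ?\<gamma> = "lbl (Node cs0)"
  let ?p = "\<lambda>i. prod_list (map (\<lambda>c. ten R W c i idx) cs0)"
  have good': "good_mtree (Node cs0)" using good Node by simp
  have "ten R (col_upd W ?\<gamma> r u) c i idx = ten R W c i idx" if c: "c \<in> set cs0" for c i u
    using lbl_subtree_of_child_neq[OF good' c] by (intro ten_cong_subtrees) (simp add: col_upd_def)
  then have "ten R (col_upd W ?\<gamma> r u) (Node cs0) k idx = (\<Sum>i<R ?\<gamma>. col_upd W ?\<gamma> r u ?\<gamma> i k * ?p i)"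
    for u k by (simp del: lbl.simps cong: map_cong)
  then show ?thesis
    using Node by (intro exI[of _ ?p]) (simp del: lbl.simps add: col_upd_def rk_Node[OF good'])
qed

lemma ten_col_upd_Node:
  assumes good: "good_mtree (Node cs)" and r: "r < R (lbl (Node cs))" and c0: "c0 \<in> set cs"
    and idx: "\<forall>n\<in>lbl c0. idx n < D n"
  shows "\<exists>p Q. \<forall>u k. ten R (col_upd W (lbl c0) r u) (Node cs) k idx
         = ten R (row_upd W (lbl (Node cs)) r (\<lambda>_. 0)) (Node cs) k idx
           + W (lbl (Node cs)) r k * (\<Sum>i<rk R D (lbl c0). u i * p i) * Q"
proof -
  let ?\<nu> = "lbl (Node cs)"
  obtain p where p: "\<And>u k. ten R (col_upd W (lbl c0) r u) c0 k idx
     = (if k = r then (\<Sum>i<rk R D (lbl c0). u i * p i) else ten R W c0 k idx)"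
    using ten_col_upd_self[OF good_mtree_child[OF good c0] idx] by blast
  define P where "P r' = (\<Prod>c\<in>set cs - {c0}. ten R W c r' idx)" for r'
  have all_children: "(\<Prod>c\<in>set cs. ten R W c r' idx) = ten R W c0 r' idx * P r'" for r'
    unfolding P_def using prod.remove[OF _ c0] by simp
  have "agrees_off c0 (col_upd W (lbl c0) r u) W" for u
    using subtrees_refl unfolding agrees_off_def by (auto simp: col_upd_def)
  note split = ten_Node_split[OF good c0 this]
  show ?thesis
  proof (intro exI[of _ p] exI[of _ "P r"] allI)
    fix u k
    have "ten R (col_upd W (lbl c0) r u) (Node cs) k idx
        = (\<Sum>r'<R ?\<nu>. W ?\<nu> r' k * ten R (col_upd W (lbl c0) r u) c0 r' idx * P r')"
      unfolding split P_def ..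
    also have "\<dots> = W ?\<nu> r k * ten R (col_upd W (lbl c0) r u) c0 r idx * P r
       + (\<Sum>r'\<in>{..<R ?\<nu>} - {r}. W ?\<nu> r' k * ten R (col_upd W (lbl c0) r u) c0 r' idx * P r')"
      using sum.remove[of "{..<R ?\<nu>}" r] r by simp
    also have "\<dots> = W ?\<nu> r k * (\<Sum>i<rk R D (lbl c0). u i * p i) * P r
       + (\<Sum>r'\<in>{..<R ?\<nu>} - {r}. W ?\<nu> r' k * ten R W c0 r' idx * P r')"
      by (intro arg_cong2[where f = "(+)"] sum.cong) (auto simp: p)
    also have "(\<Sum>r'\<in>{..<R ?\<nu>} - {r}. W ?\<nu> r' k * ten R W c0 r' idx * P r')
        = ten R (row_upd W ?\<nu> r (\<lambda>_. 0)) (Node cs) k idx"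
      unfolding ten_row_upd_Node[where R = R, OF good r] all_children by (simp add: mult.assoc)
    finally show "ten R (col_upd W (lbl c0) r u) (Node cs) k idx
        = ten R (row_upd W ?\<nu> r (\<lambda>_. 0)) (Node cs) k idx + W ?\<nu> r k * (\<Sum>i<rk R D (lbl c0). u i * p i) * P r"
      by simp
  qed
qed

lemma ten_affine_in_row:
  assumes good: "good_mtree T" and S: "Node cs \<in> subtrees T" and r: "r < R (lbl (Node cs))"
  shows "\<exists>q. \<forall>v. ten R (row_upd W (lbl (Node cs)) r v) T 0 idx
     = ten R (row_upd W (lbl (Node cs)) r (\<lambda>_. 0)) T 0 idx + (\<Sum>k<prk T R D (lbl (Node cs)). v k * q k)"
proof -
  let ?\<nu> = "lbl (Node cs)"
  obtain coef where coef: "\<And>W'. agrees_off (Node cs) W' W \<Longrightarrow>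
     ten R W' T 0 idx = (\<Sum>k<prk T R D ?\<nu>. coef k * ten R W' (Node cs) k idx)"
    using ten_linear_in_node[OF good S, of W R idx D] by blast
  let ?P = "\<Prod>c\<in>set cs. ten R W c r idx"
  have "ten R (row_upd W ?\<nu> r v) T 0 idx
      = (\<Sum>k<prk T R D ?\<nu>. coef k * ten R (row_upd W ?\<nu> r v) (Node cs) k idx)" for v
    using subtrees_refl by (intro coef) (auto simp: agrees_off_def row_upd_def)
  then show ?thesis
    unfolding ten_row_upd_Node[where R = R, OF good_mtree_subtree[OF good S] r]
    by (intro exI[of _ "\<lambda>k. coef k * ?P"]) (simp add: sum.distrib algebra_simps)
qed

lemma ten_affine_in_col:
  assumes good: "good_mtree T" and S: "Node cs \<in> subtrees T" and r: "r < R (lbl (Node cs))"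
    and c0: "c0 \<in> set cs" and idx: "\<forall>n\<in>lbl c0. idx n < D n"
  shows "\<exists>p. \<forall>u. ten R (col_upd W (lbl c0) r u) T 0 idx
     = ten R (row_upd W (lbl (Node cs)) r (\<lambda>_. 0)) T 0 idx + (\<Sum>i<rk R D (lbl c0). u i * p i)"
proof -
  let ?\<nu> = "lbl (Node cs)"
  let ?K = "prk T R D ?\<nu>"
  obtain coef where coef: "\<And>W'. agrees_off (Node cs) W' W \<Longrightarrow>
     ten R W' T 0 idx = (\<Sum>k<?K. coef k * ten R W' (Node cs) k idx)"
    using ten_linear_in_node[OF good S, of W R idx D] by blast
  obtain p Q where pQ: "\<And>u k. ten R (col_upd W (lbl c0) r u) (Node cs) k idx
      = ten R (row_upd W ?\<nu> r (\<lambda>_. 0)) (Node cs) k idx + W ?\<nu> r k * (\<Sum>i<rk R D (lbl c0). u i * p i) * Q"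
    using ten_col_upd_Node[where R = R, OF good_mtree_subtree[OF good S] r c0 idx] by blast
  have zero_row: "ten R (row_upd W ?\<nu> r (\<lambda>_. 0)) T 0 idx
      = (\<Sum>k<?K. coef k * ten R (row_upd W ?\<nu> r (\<lambda>_. 0)) (Node cs) k idx)"
    using subtrees_refl by (intro coef) (auto simp: agrees_off_def row_upd_def)
  have "lbl c0 \<in> lbl ` subtrees (Node cs)" using child_in_subtrees[OF c0] by blast
  then have col: "ten R (col_upd W (lbl c0) r u) T 0 idx
      = (\<Sum>k<?K. coef k * ten R (col_upd W (lbl c0) r u) (Node cs) k idx)" for u
    by (intro coef) (auto simp: agrees_off_def col_upd_def)
  define C where "C = (\<Sum>k<?K. coef k * W ?\<nu> r k * Q)"
  show ?thesis
  proof (intro exI[of _ "\<lambda>i. p i * C"] allI)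
    fix u
    have "ten R (col_upd W (lbl c0) r u) T 0 idx
        = ten R (row_upd W ?\<nu> r (\<lambda>_. 0)) T 0 idx + (\<Sum>i<rk R D (lbl c0). u i * p i) * C"
      unfolding col pQ zero_row C_def by (simp add: sum.distrib sum_distrib_left algebra_simps)
    then show "ten R (col_upd W (lbl c0) r u) T 0 idx
        = ten R (row_upd W ?\<nu> r (\<lambda>_. 0)) T 0 idx + (\<Sum>i<rk R D (lbl c0). u i * (p i * C))"
      by (simp only: sum_distrib_right mult.assoc)
  qed
qed

section \<open>Gradients along lines\<close>

definition tinner :: "nat \<Rightarrow> (nat \<Rightarrow> nat) \<Rightarrow> tensor \<Rightarrow> tensor \<Rightarrow> real" where
  "tinner N D X Y = (\<Sum>idx\<in>idxset N D. X idx * Y idx)"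

lemma tinner_sum_right: "tinner N D X (\<lambda>idx. \<Sum>j<K. c j * Y j idx) = (\<Sum>j<K. c j * tinner N D X (Y j))"
  unfolding tinner_def by (simp add: sum_distrib_left sum.swap[of _ "idxset N D"] algebra_simps)

lemma tnorm_nonneg: "0 \<le> tnorm N D H"
  unfolding tnorm_def by (simp add: sum_nonneg)

lemma tnorm_scale: "tnorm N D (\<lambda>idx. h * H idx) = \<bar>h\<bar> * tnorm N D H"
proof -
  have "(\<Sum>idx\<in>idxset N D. (h * H idx)\<^sup>2) = h\<^sup>2 * (\<Sum>idx\<in>idxset N D. (H idx)\<^sup>2)"
    by (simp add: power_mult_distrib sum_distrib_left)
  then show ?thesis unfolding tnorm_def by (simp add: real_sqrt_mult)
qed

lemma is_gradient_line_quotient: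
  assumes grad: "is_gradient N D L G" and X: "X \<in> tspace N D" and H: "H \<in> tspace N D"
    and e: "0 < e"
  shows "\<exists>s>0. \<forall>h. h \<noteq> 0 \<and> \<bar>h\<bar> < s \<longrightarrow>
           \<bar>(L (\<lambda>idx. X idx + h * H idx) - L X) / h - tinner N D (G X) H\<bar> < e"
proof -
  define M where "M = tnorm N D H + 1"
  have M: "0 < M" "tnorm N D H < M" unfolding M_def using tnorm_nonneg[of N D H] by auto
  have "0 < e / M" using e M by simp
  then obtain \<delta> where \<delta>: "0 < \<delta>" and remainder: "\<forall>H'\<in>tspace N D. tnorm N D H' < \<delta> \<longrightarrow>
      \<bar>L (\<lambda>idx. X idx + H' idx) - L X - (\<Sum>idx\<in>idxset N D. G X idx * H' idx)\<bar> \<le> e / M * tnorm N D H'"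
    using grad X unfolding is_gradient_def by blast
  show ?thesis
  proof (intro exI[of _ "\<delta> / M"] conjI allI impI)
    fix h :: real assume h: "h \<noteq> 0 \<and> \<bar>h\<bar> < \<delta> / M"
    have hH: "(\<lambda>idx. h * H idx) \<in> tspace N D" using H unfolding tspace_def by simp
    have "tnorm N D (\<lambda>idx. h * H idx) \<le> \<bar>h\<bar> * M"
      unfolding tnorm_scale using M by (simp add: mult_left_mono)
    also have "\<dots> < \<delta>" using h M by (simp add: pos_less_divide_eq)
    finally have "\<bar>L (\<lambda>idx. X idx + h * H idx) - L X - (\<Sum>idx\<in>idxset N D. G X idx * (h * H idx))\<bar>
        \<le> e / M * tnorm N D (\<lambda>idx. h * H idx)"
      using remainder hH by blast
    moreover have "(\<Sum>idx\<in>idxset N D. G X idx * (h * H idx)) = h * tinner N D (G X) H"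
      unfolding tinner_def by (simp add: sum_distrib_left ac_simps)
    ultimately have bound: "\<bar>L (\<lambda>idx. X idx + h * H idx) - L X - h * tinner N D (G X) H\<bar>
        \<le> e / M * (\<bar>h\<bar> * tnorm N D H)"
      unfolding tnorm_scale by simp
    have quotient: "(L (\<lambda>idx. X idx + h * H idx) - L X) / h - tinner N D (G X) H
        = (L (\<lambda>idx. X idx + h * H idx) - L X - h * tinner N D (G X) H) / h"
      using h by (simp add: diff_divide_distrib)
    have "\<bar>(L (\<lambda>idx. X idx + h * H idx) - L X) / h - tinner N D (G X) H\<bar>
        \<le> e / M * (\<bar>h\<bar> * tnorm N D H) / \<bar>h\<bar>"
      unfolding quotient abs_divide by (rule divide_right_mono[OF bound abs_ge_zero])
    also have "\<dots> = e / M * tnorm N D H" using h by simp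
    also have "\<dots> < e" using M e by (simp add: field_simps)
    finally show "\<bar>(L (\<lambda>idx. X idx + h * H idx) - L X) / h - tinner N D (G X) H\<bar> < e" .
  qed (use \<delta> M in simp)
qed

lemma is_gradient_has_real_derivative_line:
  assumes "is_gradient N D L G" "X \<in> tspace N D" "H \<in> tspace N D"
  shows "((\<lambda>x. L (\<lambda>idx. X idx + (x - x0) * H idx)) has_real_derivative tinner N D (G X) H) (at x0)"
  unfolding DERIV_def
proof (rule LIM_I)
  fix e :: real assume "0 < e"
  then show "\<exists>s>0. \<forall>h. h \<noteq> 0 \<and> norm (h - 0) < s \<longrightarrow>
      norm ((L (\<lambda>idx. X idx + (x0 + h - x0) * H idx) - L (\<lambda>idx. X idx + (x0 - x0) * H idx)) / h
        - tinner N D (G X) H) < e"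
    using is_gradient_line_quotient[OF assms] by simp
qed

lemma fun_upd_weighted_sum:
  fixes v :: "nat \<Rightarrow> real"
  assumes "j < K"
  shows "(\<Sum>j'<K. (v(j := x)) j' * q j') = (\<Sum>j'<K. v j' * q j') + (x - v j) * q j"
proof -
  have "(\<Sum>j'<K. (v(j := x)) j' * q j') = (\<Sum>j'<K. v j' * q j' + (if j' = j then (x - v j) * q j' else 0))"
    by (rule sum.cong) (auto simp: algebra_simps)
  then show ?thesis using assms by (simp add: sum.distrib)
qed

lemma tspace_affine_coefficients:
  assumes F_space: "\<And>v. F v \<in> tspace N D" and A_space: "A \<in> tspace N D"
    and affine: "\<And>idx. idx \<in> idxset N D \<Longrightarrow> \<exists>p. \<forall>v. F v idx = A idx + (\<Sum>j<K. v j * p j)"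
  obtains Q where "\<And>j. Q j \<in> tspace N D" "\<And>v. F v = (\<lambda>idx. A idx + (\<Sum>j<K. v j * Q j idx))"
proof -
  have "\<forall>idx\<in>idxset N D. \<exists>p. \<forall>v. F v idx = A idx + (\<Sum>j<K. v j * p j)"
    using affine by blast
  then obtain p where p: "\<forall>idx\<in>idxset N D. \<forall>v. F v idx = A idx + (\<Sum>j<K. v j * p idx j)"
    by (metis bchoice)
  define Q where "Q j idx = (if idx \<in> idxset N D then p idx j else 0)" for j idx
  have "Q j \<in> tspace N D" for j
    unfolding Q_def tspace_def by simp
  moreover have "F v idx = A idx + (\<Sum>j<K. v j * Q j idx)" for v idx
    using p F_space A_space unfolding Q_def tspace_def by (cases "idx \<in> idxset N D") auto
  ultimately show ?thesis using that by blast
qed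

text \<open>With \<open>F v = A + \<Sum>\<^sub>j v\<^sub>j Q\<^sub>j\<close>, each \<open>V\<^sub>j\<close> moves at rate \<open>-\<langle>\<nabla>L, Q\<^sub>j\<rangle>\<close>, so
  \<open>\<Sum>\<^sub>j V\<^sub>j\<^sup>2\<close> moves at rate \<open>-2\<langle>\<nabla>L, \<Sum>\<^sub>j V\<^sub>j Q\<^sub>j\<rangle> = -2\<langle>\<nabla>L, F V - A\<rangle>\<close>.\<close>
lemma flow_sum_squares_has_derivative:
  fixes V :: "real \<Rightarrow> nat \<Rightarrow> real" and F :: "(nat \<Rightarrow> real) \<Rightarrow> tensor"
  assumes grad: "is_gradient N D L G"
    and F_space: "\<And>v. F v \<in> tspace N D" and A_space: "A \<in> tspace N D"
    and affine: "\<And>idx. idx \<in> idxset N D \<Longrightarrow> \<exists>p. \<forall>v. F v idx = A idx + (\<Sum>j<K. v j * p j)"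
    and flow: "\<And>j. j < K \<Longrightarrow> \<exists>g. ((\<lambda>x. L (F ((V t)(j := x)))) has_real_derivative g) (at (V t j))
                 \<and> ((\<lambda>s. V s j) has_real_derivative -g) (at t within {0..})"
  shows "((\<lambda>s. \<Sum>j<K. (V s j)\<^sup>2) has_real_derivative
           -2 * tinner N D (G (F (V t))) (\<lambda>idx. F (V t) idx - A idx)) (at t within {0..})"
proof -
  obtain Q where Q_space: "\<And>j. Q j \<in> tspace N D"
    and F_eq: "\<And>v. F v = (\<lambda>idx. A idx + (\<Sum>j<K. v j * Q j idx))"
    using tspace_affine_coefficients[OF F_space A_space affine] by blast
  let ?X = "F (V t)"
  have "((\<lambda>s. V s j) has_real_derivative - tinner N D (G ?X) (Q j)) (at t within {0..})"
    if j: "j < K" for j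
  proof -
    obtain g where g: "((\<lambda>x. L (F ((V t)(j := x)))) has_real_derivative g) (at (V t j))"
      and V: "((\<lambda>s. V s j) has_real_derivative -g) (at t within {0..})"
      using flow[OF j] by blast
    have "F ((V t)(j := x)) = (\<lambda>idx. ?X idx + (x - V t j) * Q j idx)" for x
      unfolding F_eq fun_upd_weighted_sum[OF j] by (simp add: algebra_simps)
    then have "((\<lambda>x. L (F ((V t)(j := x)))) has_real_derivative tinner N D (G ?X) (Q j)) (at (V t j))"
      using is_gradient_has_real_derivative_line[OF grad F_space Q_space] by presburger
    then show ?thesis using V DERIV_unique[OF g] by metis
  qed
  then have deriv: "((\<lambda>s. \<Sum>j<K. V s j * V s j) has_real_derivative
      (\<Sum>j<K. - tinner N D (G ?X) (Q j) * V t j + - tinner N D (G ?X) (Q j) * V t j)) (at t within {0..})"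
    by (intro DERIV_sum DERIV_mult) auto
  have linear_part: "(\<lambda>idx. ?X idx - A idx) = (\<lambda>idx. \<Sum>j<K. V t j * Q j idx)"
    using F_eq by simp
  have rate: "(\<Sum>j<K. - tinner N D (G ?X) (Q j) * V t j + - tinner N D (G ?X) (Q j) * V t j)
      = -2 * tinner N D (G ?X) (\<lambda>idx. ?X idx - A idx)"
    unfolding linear_part tinner_sum_right by (simp add: sum_distrib_left algebra_simps)
  show ?thesis
    using deriv unfolding rate by (simp add: power2_eq_square)
qed

lemma vnorm_map_upt_squared: "(vnorm (map f [0..<K]))\<^sup>2 = (\<Sum>j<K. (f j)\<^sup>2)"
  unfolding vnorm_def by (simp add: sum_list_sum_nth atLeast0LessThan sum_nonneg)

lemma mode_tree_good_mtree: "mode_tree N T \<Longrightarrow> good_mtree T"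
  unfolding mode_tree_def good_mtree_def by blast

lemma children_lbl_Node:
  assumes "good_mtree T" "Node cs \<in> subtrees T"
  shows "children T (lbl (Node cs)) = lbl ` set cs"
proof -
  have "Node cs' = Node cs" if "Node cs' \<in> subtrees T" "lbl (Node cs') = lbl (Node cs)" for cs'
    using inj_on_lbl_subtrees[OF assms(1)] that assms(2) by (auto dest: inj_onD simp del: lbl.simps)
  then show ?thesis
    unfolding children_def using assms(2) by (auto simp del: lbl.simps)
qed

lemma idxset_subtree_bound:
  assumes "mode_tree N T" "S \<in> subtrees T" "idx \<in> idxset N D"
  shows "\<forall>n\<in>lbl S. idx n < D n"
  using assms lbl_subtree_subset[OF assms(2)]
  unfolding mode_tree_def idxset_def lbl_eq_set_leaves by blast

lemma end_tensor_space: "end_tensor N D T R W \<in> tspace N D"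
  unfolding end_tensor_def tspace_def by simp

text \<open>Zeroing row \<open>r\<close> of the weight matrix at \<open>\<nu>\<close> or column \<open>r\<close> of the weight matrix at any
  child of \<open>\<nu>\<close> removes exactly the summand of index \<open>r\<close> at \<open>\<nu>\<close>, so this rate serves every vector of
  \<open>LC(\<nu>, r)\<close>.\<close>
definition lc_rate :: "nat \<Rightarrow> (nat \<Rightarrow> nat) \<Rightarrow> mtree \<Rightarrow> (nat set \<Rightarrow> nat) \<Rightarrow> (tensor \<Rightarrow> tensor)
    \<Rightarrow> params \<Rightarrow> nat set \<Rightarrow> nat \<Rightarrow> real" where
  "lc_rate N D T R G W \<nu> r = -2 * tinner N D (G (end_tensor N D T R W))
     (\<lambda>idx. end_tensor N D T R W idx - end_tensor N D T R (row_upd W \<nu> r (\<lambda>_. 0)) idx)"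

lemma gradient_flow_row_has_derivative:
  assumes T: "mode_tree N T" and grad: "is_gradient N D L G" and flow: "gradient_flow N D T R L W"
    and S: "Node cs \<in> subtrees T" and r: "r < R (lbl (Node cs))" and t: "0 \<le> t"
  shows "((\<lambda>s. (vnorm (map (\<lambda>j. W s (lbl (Node cs)) r j) [0..<prk T R D (lbl (Node cs))]))\<^sup>2)
           has_real_derivative lc_rate N D T R G (W t) (lbl (Node cs)) r) (at t within {0..})"
proof -
  let ?\<nu> = "lbl (Node cs)"
  have good: "good_mtree T" using mode_tree_good_mtree[OF T] .
  have "((\<lambda>s. \<Sum>j<prk T R D ?\<nu>. (W s ?\<nu> r j)\<^sup>2) has_real_derivative
      -2 * tinner N D (G (end_tensor N D T R (row_upd (W t) ?\<nu> r (W t ?\<nu> r))))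
        (\<lambda>idx. end_tensor N D T R (row_upd (W t) ?\<nu> r (W t ?\<nu> r)) idx
             - end_tensor N D T R (row_upd (W t) ?\<nu> r (\<lambda>_. 0)) idx)) (at t within {0..})"
  proof (rule flow_sum_squares_has_derivative[OF grad end_tensor_space end_tensor_space])
    show "\<exists>q. \<forall>v. end_tensor N D T R (row_upd (W t) ?\<nu> r v) idx
        = end_tensor N D T R (row_upd (W t) ?\<nu> r (\<lambda>_. 0)) idx + (\<Sum>j<prk T R D ?\<nu>. v j * q j)"
      if "idx \<in> idxset N D" for idx
      using that ten_affine_in_row[where R = R, OF good S r] unfolding end_tensor_def by simp
    have "?\<nu> \<in> nodes T" using S unfolding nodes_def by (rule imageI)
    moreover have "r < rk R D ?\<nu>" using r rk_Node[OF good_mtree_subtree[OF good S]] by simp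
    ultimately
    show "\<exists>g. ((\<lambda>x. L (end_tensor N D T R (row_upd (W t) ?\<nu> r ((W t ?\<nu> r)(j := x)))))
          has_real_derivative g) (at (W t ?\<nu> r j))
        \<and> ((\<lambda>s. W s ?\<nu> r j) has_real_derivative -g) (at t within {0..})"
      if "j < prk T R D ?\<nu>" for j
      using flow t that unfolding gradient_flow_def phiH_def row_upd_fun_upd by blast
  qed
  then show ?thesis
    unfolding vnorm_map_upt_squared lc_rate_def row_upd_same .
qed

lemma gradient_flow_col_has_derivative:
  assumes T: "mode_tree N T" and grad: "is_gradient N D L G" and flow: "gradient_flow N D T R L W"
    and S: "Node cs \<in> subtrees T" and r: "r < R (lbl (Node cs))" and c0: "c0 \<in> set cs"
    and t: "0 \<le> t"
  shows "((\<lambda>s. (vnorm (map (\<lambda>i. W s (lbl c0) i r) [0..<rk R D (lbl c0)]))\<^sup>2)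
           has_real_derivative lc_rate N D T R G (W t) (lbl (Node cs)) r) (at t within {0..})"
proof -
  let ?\<nu> = "lbl (Node cs)" and ?\<gamma> = "lbl c0"
  have good: "good_mtree T" using mode_tree_good_mtree[OF T] .
  have c0T: "c0 \<in> subtrees T" using subtrees_trans[OF child_in_subtrees[OF c0] S] .
  have "((\<lambda>s. \<Sum>i<rk R D ?\<gamma>. (W s ?\<gamma> i r)\<^sup>2) has_real_derivative
      -2 * tinner N D (G (end_tensor N D T R (col_upd (W t) ?\<gamma> r (\<lambda>i. W t ?\<gamma> i r))))
        (\<lambda>idx. end_tensor N D T R (col_upd (W t) ?\<gamma> r (\<lambda>i. W t ?\<gamma> i r)) idx
             - end_tensor N D T R (row_upd (W t) ?\<nu> r (\<lambda>_. 0)) idx)) (at t within {0..})"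
  proof (rule flow_sum_squares_has_derivative[OF grad end_tensor_space end_tensor_space])
    show "\<exists>p. \<forall>u. end_tensor N D T R (col_upd (W t) ?\<gamma> r u) idx
        = end_tensor N D T R (row_upd (W t) ?\<nu> r (\<lambda>_. 0)) idx + (\<Sum>i<rk R D ?\<gamma>. u i * p i)"
      if "idx \<in> idxset N D" for idx
      using that ten_affine_in_col[where R = R, OF good S r c0 idxset_subtree_bound[OF T c0T that]]
      unfolding end_tensor_def by simp
    have "?\<gamma> \<in> nodes T" using c0T unfolding nodes_def by (rule imageI)
    moreover have "r < prk T R D ?\<gamma>" using r prk_child[OF good S c0] by simp
    ultimately
    show "\<exists>g. ((\<lambda>x. L (end_tensor N D T R (col_upd (W t) ?\<gamma> r ((\<lambda>i. W t ?\<gamma> i r)(i := x)))))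
          has_real_derivative g) (at (W t ?\<gamma> i r))
        \<and> ((\<lambda>s. W s ?\<gamma> i r) has_real_derivative -g) (at t within {0..})"
      if "i < rk R D ?\<gamma>" for i
      using flow t that unfolding gradient_flow_def phiH_def col_upd_fun_upd by blast
  qed
  then show ?thesis
    unfolding vnorm_map_upt_squared lc_rate_def col_upd_same .
qed

lemma gradient_flow_LC_has_derivative:
  assumes T: "mode_tree N T" and grad: "is_gradient N D L G" and flow: "gradient_flow N D T R L W"
    and \<nu>: "\<nu> \<in> interior T" and r: "r < R \<nu>" and w: "w \<in> LC T R D \<nu> r" and t: "0 \<le> t"
  shows "((\<lambda>s. (vnorm (w (W s)))\<^sup>2) has_real_derivative lc_rate N D T R G (W t) \<nu> r) (at t within {0..})"
proof -
  obtain cs where S: "Node cs \<in> subtrees T" and \<nu>_eq: "\<nu> = lbl (Node cs)"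
    using \<nu> unfolding interior_def by blast
  have r': "r < R (lbl (Node cs))" using r \<nu>_eq by simp
  have "children T \<nu> = lbl ` set cs"
    using children_lbl_Node[OF mode_tree_good_mtree[OF T] S] \<nu>_eq by simp
  with w consider "w = (\<lambda>W. map (\<lambda>j. W \<nu> r j) [0..<prk T R D \<nu>])"
    | c0 where "c0 \<in> set cs" "w = (\<lambda>W. map (\<lambda>i. W (lbl c0) i r) [0..<rk R D (lbl c0)])"
    unfolding LC_def by auto
  then show ?thesis
  proof cases
    case 1
    show ?thesis
      unfolding 1 \<nu>_eq by (rule gradient_flow_row_has_derivative[OF T grad flow S r' t])
  next
    case (2 c0)
    show ?thesis
      unfolding 2(2) \<nu>_eq by (rule gradient_flow_col_has_derivative[OF T grad flow S r' 2(1) t])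
  qed
qed

theorem lemma2:
  fixes N :: nat and D :: "nat \<Rightarrow> nat" and T :: mtree and R :: "nat set \<Rightarrow> nat"
    and L :: "tensor \<Rightarrow> real" and W :: "real \<Rightarrow> params"
  assumes "mode_tree N T"
    and "\<forall>n\<in>{1..N}. D n \<ge> 1"
    and "\<forall>\<nu>\<in>interior T. R \<nu> \<ge> 1"
    and "differentiable_loss N D L"
    and "locally_smooth_loss N D L"
    and "gradient_flow N D T R L W"
  shows "\<forall>\<nu>\<in>interior T. \<forall>r<R \<nu>. \<forall>w\<in>LC T R D \<nu> r. \<forall>w'\<in>LC T R D \<nu> r. \<forall>t\<ge>0.
           (vnorm (w (W t)))\<^sup>2 - (vnorm (w' (W t)))\<^sup>2 = (vnorm (w (W 0)))\<^sup>2 - (vnorm (w' (W 0)))\<^sup>2"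
proof (intro ballI allI impI)
  fix \<nu> r w w' and t :: real
  assume \<nu>: "\<nu> \<in> interior T" and r: "r < R \<nu>" and w: "w \<in> LC T R D \<nu> r"
    and w': "w' \<in> LC T R D \<nu> r" and t: "0 \<le> t"
  obtain G where grad: "is_gradient N D L G"
    using assms(4) unfolding differentiable_loss_def by blast
  note deriv = gradient_flow_LC_has_derivative[OF assms(1) grad assms(6) \<nu> r]
  have "((\<lambda>s. (vnorm (w (W s)))\<^sup>2 - (vnorm (w' (W s)))\<^sup>2) has_real_derivative 0) (at s within {0..})"
    if "s \<in> {0..}" for s
    using DERIV_diff[OF deriv[OF w] deriv[OF w']] that by simp
  then obtain c where "\<forall>s\<in>{0..}. (vnorm (w (W s)))\<^sup>2 - (vnorm (w' (W s)))\<^sup>2 = c"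
    using has_field_derivative_zero_constant[OF convex_real_interval(1)] by blast
  then show "(vnorm (w (W t)))\<^sup>2 - (vnorm (w' (W t)))\<^sup>2 = (vnorm (w (W 0)))\<^sup>2 - (vnorm (w' (W 0)))\<^sup>2"
    using t by simp
qed

end
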